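(* Let $(g,f)$ be a Riordan matrix possessing a type-II $B$-sequence $(\hat b_j)_{j\ge0}$ with generating function $\hat B(t)=\sum_{j\ge0}\hat b_jt^j$, and let $Z(t)$ be the generating function of its $Z$-sequence. Then $$g=1+tg\,\hat B(tf),\qquad Z(f)=\hat B(tf),\qquad Z(t)=\hat B(t\bar f(t)).$$
   Context: Let $K$ be $\mathbb{R}$ or $\mathbb{C}$. A (proper) Riordan matrix is a pair $(g,f)$ of formal power series in $K[[t]]$ with $g(0)=1$, $f(0)=0$, $f'(0)\neq 0$, identified with the infinite lower triangular matrix $(d_{n,k})_{n,k\ge0}$, $d_{n,k}=[t^n]g(t)f(t)^k$; we set $d_{n,k}=0$ if $n<0$, $k<0$ or $k>n$. $\bar f$ is the compositional inverse of $f$. The $Z$-sequence of $(g,f)$ is the unique sequence whose generating function $Z(t)$ satisfies $g(t)=1/(1-tZ(f(t)))$. A type-II $B$-sequence of $(g,f)$ is a sequence $(\hat b_j)_{j\ge0}$ such that $d_{n+1,0}=\sum_{j\ge0}\hat b_j d_{n-j,j}$ for all $n\ge0$. *)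

theory Defs
  imports "HOL-Computational_Algebra.Formal_Power_Series"
begin

definition riordan :: "'a::field fps \<Rightarrow> 'a fps \<Rightarrow> bool" where
  "riordan g f \<longleftrightarrow> fps_nth g 0 = 1 \<and> fps_nth f 0 = 0 \<and> fps_nth f 1 \<noteq> 0"

text \<open>Entry d(n,k) = [t^n] g f^k, and 0 for k > n (negative indices do not occur for nat;
  the convention d(n-j,j)=0 for n-j<0 is handled by summing only over j \<le> n).\<close>
definition riordan_entry :: "'a::field fps \<Rightarrow> 'a fps \<Rightarrow> nat \<Rightarrow> nat \<Rightarrow> 'a" where
  "riordan_entry g f n k = (if k \<le> n then fps_nth (g * f ^ k) n else 0)"

definition is_Z_gf :: "'a::field fps \<Rightarrow> 'a fps \<Rightarrow> 'a fps \<Rightarrow> bool" where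
  "is_Z_gf g f Z \<longleftrightarrow> g = inverse (1 - fps_X * (Z oo f))"

text \<open>Type-II B-sequence: d(n+1,0) = sum_{j\<ge>0} b_j d(n-j,j) for all n
  (terms with j > n vanish since then n-j < 0).\<close>
definition is_typeII_B_seq :: "'a::field fps \<Rightarrow> 'a fps \<Rightarrow> (nat \<Rightarrow> 'a) \<Rightarrow> bool" where
  "is_typeII_B_seq g f b \<longleftrightarrow>
     (\<forall>n. riordan_entry g f (Suc n) 0 = (\<Sum>j\<le>n. b j * riordan_entry g f (n - j) j))"

end

(* Since [t^n] g (t f)^j = d(n-j, j), the defining recurrence of a type-II B-sequence says
   exactly that [t^(n+1)] g = [t^n] g B(t f) for all n, i.e. g = 1 + t g B(t f). Hence
   g = 1/(1 - t B(t f)), and comparing with g = 1/(1 - t Z(f)) yields Z(f) = B(t f);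
   composing with the compositional inverse of f gives Z(t) = B(t fbar(t)). *)

theory Submission
  imports Defs
begin

unbundle fps_syntax

lemma fps_mult_power_nth_eq_0:
  fixes g f :: "'a::comm_ring_1 fps"
  assumes "f $ 0 = 0" and "n < k"
  shows "(g * f ^ k) $ n = 0"
  unfolding fps_mult_nth
  using startsby_zero_power_prefix[OF assms(1), of k] assms(2) by (intro sum.neutral) auto

lemma riordan_entry_eq_nth:
  assumes "f $ 0 = 0"
  shows "riordan_entry g f n k = (g * f ^ k) $ n"
  using fps_mult_power_nth_eq_0[OF assms, of n k g] by (simp add: riordan_entry_def)

lemma fps_mult_compose_nth:
  fixes g a h :: "'a::comm_ring_1 fps"
  assumes h0: "h $ 0 = 0"
  shows "(g * (a oo h)) $ n = (\<Sum>j\<le>n. a $ j * (g * h ^ j) $ n)"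
proof -
  have compose_nth: "(a oo h) $ i = (\<Sum>j\<le>n. a $ j * (h ^ j) $ i)" if "i \<le> n" for i
    unfolding fps_compose_nth
    using startsby_zero_power_prefix[OF h0] that
    by (intro sum.mono_neutral_left) auto
  have "(g * (a oo h)) $ n = (\<Sum>i=0..n. g $ i * (\<Sum>j\<le>n. a $ j * (h ^ j) $ (n - i)))"
    unfolding fps_mult_nth by (intro sum.cong refl) (simp add: compose_nth)
  also have "\<dots> = (\<Sum>j\<le>n. a $ j * (\<Sum>i=0..n. g $ i * (h ^ j) $ (n - i)))"
    by (simp add: sum_distrib_left mult_ac sum.swap[of _ "{0..n}"])
  also have "\<dots> = (\<Sum>j\<le>n. a $ j * (g * h ^ j) $ n)"
    by (simp add: fps_mult_nth)
  finally show ?thesis .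
qed

lemma fps_mult_compose_X_mult_nth:
  fixes g f :: "'a::field fps"
  assumes "f $ 0 = 0"
  shows "(g * (Abs_fps b oo (fps_X * f))) $ n = (\<Sum>j\<le>n. b j * riordan_entry g f (n - j) j)"
proof -
  have "(g * (fps_X * f) ^ j) $ n = riordan_entry g f (n - j) j" if "j \<le> n" for j
    using that
    by (simp add: power_mult_distrib mult.left_commute[of g] fps_X_power_mult_nth
        riordan_entry_eq_nth[OF assms])
  then show ?thesis
    by (simp add: fps_mult_compose_nth)
qed

lemma typeII_B_seq_iff_fps_eq:
  fixes g f :: "'a::field fps"
  assumes "g $ 0 = 1" and "f $ 0 = 0"
  shows "is_typeII_B_seq g f b \<longleftrightarrow> g = 1 + fps_X * g * (Abs_fps b oo (fps_X * f))"
proof -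
  have "g = 1 + fps_X * g * (Abs_fps b oo (fps_X * f)) \<longleftrightarrow>
        (\<forall>n. g $ Suc n = (g * (Abs_fps b oo (fps_X * f))) $ n)"
    unfolding fps_eq_iff using assms(1) by (auto simp: mult.assoc gr0_conv_Suc)
  moreover have "riordan_entry g f (Suc n) 0 = g $ Suc n" for n
    by (simp add: riordan_entry_def)
  ultimately show ?thesis
    by (simp add: is_typeII_B_seq_def fps_mult_compose_X_mult_nth[OF assms(2)])
qed

lemma fps_eq_inverse_one_minus_X_mult:
  fixes g a :: "'a::field fps"
  assumes "g = 1 + fps_X * g * a"
  shows "g = inverse (1 - fps_X * a)"
proof -
  have "(1 - fps_X * a) * g = 1"
    using assms by (simp add: algebra_simps)
  then show ?thesis
    by (rule fps_inverse_unique[symmetric])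
qed

lemma inverse_one_minus_X_mult_eq_iff:
  fixes a c :: "'a::field fps"
  shows "inverse (1 - fps_X * a) = inverse (1 - fps_X * c) \<longleftrightarrow> a = c"
proof
  assume "inverse (1 - fps_X * a) = inverse (1 - fps_X * c)"
  then have "inverse (inverse (1 - fps_X * a)) = inverse (inverse (1 - fps_X * c))"
    by simp
  then have "fps_X * a = fps_X * c"
    by simp
  then show "a = c"
    by simp
qed simp

lemma fps_compose_eq_iff_eq_compose_inv:
  fixes a c f :: "'a::field fps"
  assumes f0: "f $ 0 = 0" and f1: "f $ 1 \<noteq> 0"
  shows "a oo f = c \<longleftrightarrow> a = c oo fps_inv f"
proof -
  have inv0: "fps_inv f $ 0 = 0"
    by (simp add: fps_inv_def)
  show ?thesis
  proof
    assume "a oo f = c"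
    then show "a = c oo fps_inv f"
      using fps_compose_assoc[OF inv0 f0, of a] fps_inv_right[OF f0 f1] by simp
  next
    assume "a = c oo fps_inv f"
    then show "a oo f = c"
      using fps_compose_assoc[OF f0 inv0, of c] fps_inv[OF f0 f1] by simp
  qed
qed

theorem proposition3p1:
  fixes g f Z :: "'a::field_char_0 fps" and b :: "nat \<Rightarrow> 'a"
  assumes "riordan g f"
    and "is_typeII_B_seq g f b"
    and "is_Z_gf g f Z"
  shows "g = 1 + fps_X * g * (Abs_fps b oo (fps_X * f))
       \<and> (Z oo f) = (Abs_fps b oo (fps_X * f))
       \<and> Z = (Abs_fps b oo (fps_X * fps_inv f))"
proof -
  have g0: "g $ 0 = 1" and f0: "f $ 0 = 0" and f1: "f $ 1 \<noteq> 0"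
    using assms(1) by (auto simp: riordan_def)
  define B where "B = Abs_fps b oo (fps_X * f)"
  have g_eq: "g = 1 + fps_X * g * B"
    using assms(2) typeII_B_seq_iff_fps_eq[OF g0 f0] by (simp add: B_def)
  have ZB: "Z oo f = B"
    using assms(3) fps_eq_inverse_one_minus_X_mult[OF g_eq]
    by (simp add: is_Z_gf_def inverse_one_minus_X_mult_eq_iff)
  have inv0: "fps_inv f $ 0 = 0"
    by (simp add: fps_inv_def)
  have "Z = B oo fps_inv f"
    using ZB fps_compose_eq_iff_eq_compose_inv[OF f0 f1] by simp
  also have "\<dots> = Abs_fps b oo ((fps_X * f) oo fps_inv f)"
    unfolding B_def by (rule fps_compose_assoc[symmetric]) (simp_all add: inv0)
  also have "(fps_X * f) oo fps_inv f = fps_X * fps_inv f"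
    by (simp add: fps_compose_mult_distrib[OF inv0] fps_inv_right[OF f0 f1] inv0 mult.commute)
  finally show ?thesis
    using g_eq ZB by (simp add: B_def)
qed

end
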